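(* Let $G$ be a connected graph with minimum degree $\delta(G)\ge 3$, and let $D\subseteq V(G)$ be a connected $3$-dominating set of $G$. Then $px_3(G)\le px_3(G[D])+1$. Moreover, this bound is tight (there are such graphs $G$ and sets $D$ with equality).
   Context: All graphs are finite, simple and undirected. For $D\subseteq V(G)$, $G[D]$ is the induced subgraph. A set $D$ is a $3$-dominating set of $G$ if every vertex of $V(G)\setminus D$ is adjacent to at least $3$ distinct vertices of $D$; it is connected if $G[D]$ is connected. An edge-coloring assigns colors to edges, adjacent edges being allowed to share a color. A tree in an edge-colored graph is proper if no two adjacent edges of it receive the same color. An edge-coloring of a connected graph $H$ is a $3$-proper coloring if for every $3$-element set $S\subseteq V(H)$ there is a proper tree in $H$ containing all vertices of $S$; $px_3(H)$ is the minimum number of colors in a $3$-proper coloring of $H$. *)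

theory Defs
  imports Main
begin

definition graph :: "'a set \<Rightarrow> 'a set set \<Rightarrow> bool" where
  "graph V E \<longleftrightarrow> finite V \<and> (\<forall>e\<in>E. \<exists>u v. e = {u, v} \<and> u \<in> V \<and> v \<in> V \<and> u \<noteq> v)"

definition induced_edges :: "'a set set \<Rightarrow> 'a set \<Rightarrow> 'a set set" where
  "induced_edges E D = {e \<in> E. e \<subseteq> D}"

definition degree :: "'a set \<Rightarrow> 'a set set \<Rightarrow> 'a \<Rightarrow> nat" where
  "degree V E v = card {u \<in> V. {u, v} \<in> E}"

definition min_degree_ge :: "'a set \<Rightarrow> 'a set set \<Rightarrow> nat \<Rightarrow> bool" where
  "min_degree_ge V E k \<longleftrightarrow> (\<forall>v\<in>V. degree V E v \<ge> k)"

definition walk :: "'a set set \<Rightarrow> 'a list \<Rightarrow> bool" where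
  "walk E xs \<longleftrightarrow> (\<forall>i. Suc i < length xs \<longrightarrow> {xs ! i, xs ! Suc i} \<in> E)"

definition connected_graph :: "'a set \<Rightarrow> 'a set set \<Rightarrow> bool" where
  "connected_graph V E \<longleftrightarrow> V \<noteq> {} \<and>
     (\<forall>u\<in>V. \<forall>v\<in>V. \<exists>xs. xs \<noteq> [] \<and> hd xs = u \<and> last xs = v \<and> set xs \<subseteq> V \<and> walk E xs)"

definition is_cycle :: "'a set set \<Rightarrow> 'a list \<Rightarrow> bool" where
  "is_cycle E xs \<longleftrightarrow> distinct xs \<and> length xs \<ge> 3 \<and>
     (\<forall>i < length xs. {xs ! i, xs ! ((i + 1) mod length xs)} \<in> E)"

definition acyclic_graph :: "'a set \<Rightarrow> 'a set set \<Rightarrow> bool" where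
  "acyclic_graph V E \<longleftrightarrow> \<not> (\<exists>xs. set xs \<subseteq> V \<and> is_cycle E xs)"

definition is_tree :: "'a set \<Rightarrow> 'a set set \<Rightarrow> bool" where
  "is_tree V E \<longleftrightarrow> connected_graph V E \<and> acyclic_graph V E"

definition subgraph :: "'a set \<Rightarrow> 'a set set \<Rightarrow> 'a set \<Rightarrow> 'a set set \<Rightarrow> bool" where
  "subgraph VT ET V E \<longleftrightarrow> VT \<subseteq> V \<and> ET \<subseteq> E \<and> (\<forall>e\<in>ET. e \<subseteq> VT)"

definition proper_edges :: "('a set \<Rightarrow> nat) \<Rightarrow> 'a set set \<Rightarrow> bool" where
  "proper_edges c ET \<longleftrightarrow> (\<forall>e1\<in>ET. \<forall>e2\<in>ET. e1 \<noteq> e2 \<and> e1 \<inter> e2 \<noteq> {} \<longrightarrow> c e1 \<noteq> c e2)"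

definition proper_tree_containing ::
  "'a set \<Rightarrow> 'a set set \<Rightarrow> ('a set \<Rightarrow> nat) \<Rightarrow> 'a set \<Rightarrow> bool" where
  "proper_tree_containing V E c S \<longleftrightarrow>
     (\<exists>VT ET. subgraph VT ET V E \<and> is_tree VT ET \<and> S \<subseteq> VT \<and> proper_edges c ET)"

definition k_proper_coloring :: "nat \<Rightarrow> 'a set \<Rightarrow> 'a set set \<Rightarrow> ('a set \<Rightarrow> nat) \<Rightarrow> bool" where
  "k_proper_coloring k V E c \<longleftrightarrow>
     (\<forall>S. S \<subseteq> V \<and> card S = k \<longrightarrow> proper_tree_containing V E c S)"

definition pxk :: "nat \<Rightarrow> 'a set \<Rightarrow> 'a set set \<Rightarrow> nat" where
  "pxk k V E = (LEAST n. \<exists>c. (\<forall>e\<in>E. c e < n) \<and> k_proper_coloring k V E c)"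

definition k_dominating :: "nat \<Rightarrow> 'a set \<Rightarrow> 'a set set \<Rightarrow> 'a set \<Rightarrow> bool" where
  "k_dominating k V E D \<longleftrightarrow> D \<subseteq> V \<and> (\<forall>v\<in>V - D. card {u \<in> D. {u, v} \<in> E} \<ge> k)"

definition connected_k_dominating :: "nat \<Rightarrow> 'a set \<Rightarrow> 'a set set \<Rightarrow> 'a set \<Rightarrow> bool" where
  "connected_k_dominating k V E D \<longleftrightarrow>
     k_dominating k V E D \<and> connected_graph D (induced_edges E D)"

end

theory Submission
  imports Defs
begin

text \<open>
Upper bound: colour \<open>G[D]\<close> optimally and give every edge not inside \<open>D\<close> one new colour.
For a triple \<open>S\<close>, every vertex of \<open>S\<close> outside \<open>D\<close> has at least three neighbours in \<open>D\<close>,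
so these vertices can be matched injectively to neighbours in \<open>D\<close>. A proper tree of \<open>G[D]\<close>
through the partners and through \<open>S \<inter> D\<close> becomes a proper tree through \<open>S\<close> once each outside
vertex is hung on its partner as a leaf: the new pendant edges are pairwise disjoint and all
carry the new colour.

Tightness: let \<open>D\<close> induce the path \<open>0 - 1 - 2\<close> and join 17 further vertices to all of \<open>D\<close>.
Two colours suffice for the path. Under a 2-colouring of \<open>G\<close> each outside vertex \<open>x\<close> has one of
8 patterns \<open>(c{0,x}, c{1,x}, c{2,x})\<close>, so three outside vertices share a pattern. In a proper tree
through them every vertex has degree at most two, and two of them can never share a neighbour in
\<open>D\<close>; this forces all three to be leaves, which a connected graph of maximum degree two cannot have.
\<close>

section \<open>Walks, reachability and trees\<close>

lemma graph_edge_subset: "graph V E \<Longrightarrow> e \<in> E \<Longrightarrow> e \<subseteq> V"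
  unfolding graph_def by force

lemma graph_finite_edges: "graph V E \<Longrightarrow> finite E"
  using graph_edge_subset unfolding graph_def by (meson PowI finite_Pow_iff finite_subset subsetI)

lemma graph_induced:
  assumes "graph V E" "D \<subseteq> V"
  shows "graph D (induced_edges E D)"
  unfolding graph_def
proof (intro conjI ballI)
  show "finite D"
    using assms finite_subset unfolding graph_def by blast
  fix e assume "e \<in> induced_edges E D"
  then obtain u v where "e = {u, v}" "u \<noteq> v" "e \<subseteq> D"
    using assms(1) unfolding graph_def induced_edges_def by auto
  then show "\<exists>u v. e = {u, v} \<and> u \<in> D \<and> v \<in> D \<and> u \<noteq> v"
    by auto
qed

lemma walk_iff_successively: "walk E xs \<longleftrightarrow> successively (\<lambda>x y. {x, y} \<in> E) xs"
  by (simp add: walk_def successively_conv_nth)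

definition reachable :: "'a set \<Rightarrow> 'a set set \<Rightarrow> 'a \<Rightarrow> 'a \<Rightarrow> bool" where
  "reachable V E u v \<longleftrightarrow>
     (\<exists>xs. xs \<noteq> [] \<and> hd xs = u \<and> last xs = v \<and> set xs \<subseteq> V \<and> walk E xs)"

lemma connected_graph_iff_reachable:
  "connected_graph V E \<longleftrightarrow> V \<noteq> {} \<and> (\<forall>u\<in>V. \<forall>v\<in>V. reachable V E u v)"
  by (simp add: connected_graph_def reachable_def)

lemma reachable_edge: "{u, v} \<in> E \<Longrightarrow> u \<in> V \<Longrightarrow> v \<in> V \<Longrightarrow> reachable V E u v"
  unfolding reachable_def walk_iff_successively by (intro exI[of _ "[u, v]"]) simp

lemma reachable_refl: "v \<in> V \<Longrightarrow> reachable V E v v"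
  unfolding reachable_def walk_iff_successively by (intro exI[of _ "[v]"]) simp

lemma reachable_trans:
  assumes "reachable V E u v" and "reachable V E v w"
  shows "reachable V E u w"
proof -
  obtain xs where xs: "xs \<noteq> []" "hd xs = u" "last xs = v" "set xs \<subseteq> V" "walk E xs"
    using assms(1) unfolding reachable_def by blast
  obtain ys where ys: "ys \<noteq> []" "hd ys = v" "last ys = w" "set ys \<subseteq> V" "walk E ys"
    using assms(2) unfolding reachable_def by blast
  have "walk E (xs @ tl ys)"
    using xs ys unfolding walk_iff_successively
    by (cases ys) (auto simp: successively_append_iff successively_Cons)
  moreover have "last (xs @ tl ys) = w" and "set (xs @ tl ys) \<subseteq> V"
    using xs ys by (cases ys; auto)+
  ultimately show ?thesis
    using xs unfolding reachable_def by (intro exI[of _ "xs @ tl ys"]) simp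
qed

lemma reachable_sym:
  assumes "reachable V E u v"
  shows "reachable V E v u"
proof -
  obtain xs where xs: "xs \<noteq> []" "hd xs = u" "last xs = v" "set xs \<subseteq> V" "walk E xs"
    using assms unfolding reachable_def by blast
  have "walk E (rev xs)"
    using xs(5) unfolding walk_iff_successively by (simp add: insert_commute)
  then show ?thesis
    using xs unfolding reachable_def by (intro exI[of _ "rev xs"]) (simp add: hd_rev last_rev)
qed

lemma reachable_mono:
  "reachable V E u v \<Longrightarrow> V \<subseteq> V' \<Longrightarrow> E \<subseteq> E' \<Longrightarrow> reachable V' E' u v"
  unfolding reachable_def walk_def by blast

lemma connected_graphI_root:
  assumes "r \<in> V" and "\<And>v. v \<in> V \<Longrightarrow> reachable V E r v"
  shows "connected_graph V E"
  unfolding connected_graph_iff_reachable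
  using assms by (blast intro: reachable_trans reachable_sym)

lemma walk_closed_subset:
  assumes "walk E xs" "xs \<noteq> []" "hd xs \<in> A" and closed: "\<And>e. e \<in> E \<Longrightarrow> e \<inter> A \<noteq> {} \<Longrightarrow> e \<subseteq> A"
  shows "set xs \<subseteq> A"
  using assms(1-3)
proof (induction xs rule: induct_list012)
  case (3 x y zs)
  have "{x, y} \<subseteq> A"
    using "3.prems" closed[of "{x, y}"] unfolding walk_iff_successively by auto
  then show ?case
    using "3.IH"(2) "3.prems"(1) unfolding walk_iff_successively by simp
qed simp_all

lemma connected_graph_closed_subset:
  assumes "connected_graph V E" "u \<in> V" "u \<in> A"
    and closed: "\<And>e. e \<in> E \<Longrightarrow> e \<inter> A \<noteq> {} \<Longrightarrow> e \<subseteq> A"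
  shows "V \<subseteq> A"
proof
  fix v assume "v \<in> V"
  then obtain xs where "xs \<noteq> []" "hd xs = u" "last xs = v" "walk E xs"
    using assms(1,2) unfolding connected_graph_def by blast
  then have "set xs \<subseteq> A"
    using walk_closed_subset[OF _ _ _ closed] assms(3) by blast
  then show "v \<in> A"
    using \<open>xs \<noteq> []\<close> \<open>last xs = v\<close> last_in_set by blast
qed

lemma connected_graph_vertex_on_edge:
  assumes "connected_graph V E" "u \<in> V" "v \<in> V" "u \<noteq> v"
  obtains e where "e \<in> E" "u \<in> e"
proof -
  have "\<not> V \<subseteq> {u}"
    using assms(3,4) by blast
  then show thesis
    using connected_graph_closed_subset[OF assms(1,2), of "{u}"] that by blast
qed

lemma reachable_distinct_walk:
  assumes "reachable V E u v"
  obtains xs where "distinct xs" "xs \<noteq> []" "hd xs = u" "last xs = v" "set xs \<subseteq> V" "walk E xs"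
proof -
  obtain xs where xs: "xs \<noteq> []" "hd xs = u" "last xs = v" "set xs \<subseteq> V" "walk E xs"
    using assms unfolding reachable_def by blast
  then show thesis
  proof (induction xs rule: length_induct)
    case (1 xs)
    show ?case
    proof (cases "distinct xs")
      case True
      then show ?thesis using "1.prems" that by blast
    next
      case False
      then obtain as y bs cs where dec: "xs = as @ [y] @ bs @ [y] @ cs"
        using not_distinct_decomp by blast
      let ?ys = "as @ [y] @ cs"
      have "walk E ?ys"
        using "1.prems"(5) unfolding dec walk_iff_successively
        by (cases cs) (auto simp: successively_append_iff successively_Cons)
      moreover have "hd ?ys = u" "last ?ys = v" "set ?ys \<subseteq> V"
        using "1.prems"(2-4) unfolding dec by (cases as; cases cs; auto)+
      moreover have "length ?ys < length xs"
        unfolding dec by simp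
      ultimately show ?thesis
        using "1.IH" by blast
    qed
  qed
qed

lemma is_cycle_two_neighbours:
  assumes "is_cycle E xs" "v \<in> set xs"
  obtains u w where "u \<noteq> w" "{u, v} \<in> E" "{v, w} \<in> E"
proof -
  let ?n = "length xs"
  have d: "distinct xs" and n: "3 \<le> ?n" and edge: "\<And>i. i < ?n \<Longrightarrow> {xs ! i, xs ! ((i + 1) mod ?n)} \<in> E"
    using assms(1) unfolding is_cycle_def by auto
  obtain i where i: "i < ?n" "v = xs ! i"
    using assms(2) by (metis in_set_conv_nth)
  define j where "j = (if i = 0 then ?n - 1 else i - 1)"
  define k where "k = (i + 1) mod ?n"
  have j: "j < ?n" "(j + 1) mod ?n = i" and k: "k < ?n" "j \<noteq> k"
    using i(1) n unfolding j_def k_def by (cases "i + 1 = ?n"; auto)+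
  have "xs ! j \<noteq> xs ! k"
    using d j(1) k by (simp add: nth_eq_iff_index_eq)
  moreover have "{xs ! j, v} \<in> E"
    using edge[OF j(1)] j(2) i(2) by simp
  moreover have "{v, xs ! k} \<in> E"
    using edge[OF i(1)] i(2) unfolding k_def by simp
  ultimately show thesis
    using that by blast
qed

lemma is_tree_singleton: "is_tree {v} {}"
  unfolding is_tree_def acyclic_graph_def
proof (intro conjI notI)
  show "connected_graph {v} {}"
    by (rule connected_graphI_root[of v]) (auto intro: reachable_refl)
next
  assume "\<exists>xs. set xs \<subseteq> {v} \<and> is_cycle {} xs"
  then obtain xs where "set xs \<subseteq> {v}" "distinct xs" "3 \<le> length xs"
    unfolding is_cycle_def by blast
  then show False
    using card_mono[of "{v}" "set xs"] by (simp add: distinct_card)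
qed

lemma is_cycle_subset_edges:
  assumes "is_cycle E xs" and "\<And>e. e \<in> E \<Longrightarrow> e \<subseteq> set xs \<Longrightarrow> e \<in> E'"
  shows "is_cycle E' xs"
proof -
  have "xs ! i \<in> set xs" "xs ! ((i + 1) mod length xs) \<in> set xs" if "i < length xs" for i
    using that by (intro nth_mem mod_less_divisor; auto)+
  then show ?thesis
    using assms unfolding is_cycle_def by simp
qed

lemma is_tree_add_leaves:
  assumes tree: "is_tree VT ET" and sub: "\<forall>e\<in>ET. e \<subseteq> VT"
    and disj: "X \<inter> VT = {}" and g: "\<forall>x\<in>X. g x \<in> VT"
  shows "is_tree (VT \<union> X) (ET \<union> (\<lambda>x. {x, g x}) ` X)"
    (is "is_tree ?V ?E")
proof -
  have conn: "connected_graph VT ET" and acyc: "acyclic_graph VT ET"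
    using tree unfolding is_tree_def by auto
  obtain r where r: "r \<in> VT"
    using conn unfolding connected_graph_def by blast
  have reach_VT: "reachable ?V ?E r v" if "v \<in> VT" for v
    using conn r that unfolding connected_graph_iff_reachable by (blast intro: reachable_mono)
  have "connected_graph ?V ?E"
  proof (rule connected_graphI_root[of r])
    fix v assume v: "v \<in> ?V"
    show "reachable ?V ?E r v"
    proof (cases "v \<in> X")
      case True
      then have "reachable ?V ?E r (g v)" "reachable ?V ?E (g v) v"
        using g reach_VT by (auto intro: reachable_edge simp: insert_commute)
      then show ?thesis
        by (rule reachable_trans)
    qed (use v reach_VT in blast)
  qed (use r in blast)
  moreover have "acyclic_graph ?V ?E"
    unfolding acyclic_graph_def
  proof
    assume "\<exists>xs. set xs \<subseteq> ?V \<and> is_cycle ?E xs"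
    then obtain xs where xs: "set xs \<subseteq> ?V" "is_cycle ?E xs" by blast
    show False
    proof (cases "set xs \<inter> X = {}")
      case True
      have "is_cycle ET xs"
      proof (rule is_cycle_subset_edges[OF xs(2)])
        fix e assume "e \<in> ?E" "e \<subseteq> set xs"
        then show "e \<in> ET" using True by blast
      qed
      then show False
        using acyc xs(1) True unfolding acyclic_graph_def by blast
    next
      case False
      then obtain x where x: "x \<in> set xs" "x \<in> X" by blast
      have pendant: "u = g x" if ux: "{u, x} \<in> ?E" for u
      proof -
        have "{u, x} \<notin> ET" using sub x(2) disj by blast
        then obtain x' where "x' \<in> X" "{u, x} = {x', g x'}" using ux by blast
        then show ?thesis using x(2) g disj by (auto simp: doubleton_eq_iff)
      qed
      obtain u w where "u \<noteq> w" "{u, x} \<in> ?E" "{x, w} \<in> ?E"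
        using is_cycle_two_neighbours[OF xs(2) x(1)] by blast
      then show False
        using pendant[of u] pendant[of w] by (simp add: insert_commute)
    qed
  qed
  ultimately show ?thesis
    unfolding is_tree_def by blast
qed

lemma subtree_extends_to_spanning_tree:
  assumes G: "graph V E" "connected_graph V E"
    and "VT \<subseteq> V" "ET \<subseteq> E" "is_tree VT ET" "\<forall>e\<in>ET. e \<subseteq> VT"
  shows "\<exists>ET'. ET' \<subseteq> E \<and> is_tree V ET'"
  using assms(3-)
proof (induction "card (V - VT)" arbitrary: VT ET rule: less_induct)
  case less
  show ?case
  proof (cases "V \<subseteq> VT")
    case True
    then show ?thesis using less.prems by (metis subset_antisym)
  next
    case False
    obtain u where u: "u \<in> VT"
      using less.prems(3) unfolding is_tree_def connected_graph_def by blast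
    then obtain e where e: "e \<in> E" "e \<inter> VT \<noteq> {}" "\<not> e \<subseteq> VT"
      using connected_graph_closed_subset[OF G(2), of u VT] False less.prems(1) by blast
    obtain a b where ab: "a \<in> VT" "b \<in> V - VT" "{b, a} \<in> E"
    proof -
      obtain u v where uv: "e = {u, v}" "u \<in> V" "v \<in> V"
        using G(1) e(1) unfolding graph_def by blast
      show thesis
      proof (cases "u \<in> VT")
        case True
        then show thesis
          using that[of u v] e uv by (simp add: insert_commute)
      next
        case False
        then show thesis
          using that[of v u] e uv by simp
      qed
    qed
    let ?ET = "ET \<union> (\<lambda>x. {x, a}) ` {b}"
    have "is_tree (VT \<union> {b}) ?ET"
      using less.prems(3,4) ab(1,2) by (intro is_tree_add_leaves) auto
    moreover have "card (V - (VT \<union> {b})) < card (V - VT)"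
      using G(1) ab(2) unfolding graph_def by (intro psubset_card_mono) auto
    moreover have "VT \<union> {b} \<subseteq> V" "?ET \<subseteq> E" "\<forall>e\<in>?ET. e \<subseteq> VT \<union> {b}"
      using less.prems(1,2,4) ab by auto
    ultimately show ?thesis
      using less.hyps[of "VT \<union> {b}" ?ET] by blast
  qed
qed

lemma connected_graph_spanning_tree:
  assumes "graph V E" "connected_graph V E"
  obtains ET where "ET \<subseteq> E" "is_tree V ET"
proof -
  obtain v where "v \<in> V"
    using assms(2) unfolding connected_graph_def by blast
  then have "\<exists>ET. ET \<subseteq> E \<and> is_tree V ET"
    using subtree_extends_to_spanning_tree[OF assms _ _ is_tree_singleton] by simp
  then show thesis
    using that by blast
qed

section \<open>Graphs of maximum degree two\<close>

definition max_degree_two :: "'a set set \<Rightarrow> bool" where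
  "max_degree_two E \<longleftrightarrow>
     (\<forall>v. \<forall>e1\<in>E. \<forall>e2\<in>E. \<forall>e3\<in>E. v \<in> e1 \<inter> e2 \<inter> e3 \<longrightarrow> e1 = e2 \<or> e1 = e3 \<or> e2 = e3)"

definition degree_le_one :: "'a set set \<Rightarrow> 'a \<Rightarrow> bool" where
  "degree_le_one E v \<longleftrightarrow> (\<forall>e1\<in>E. \<forall>e2\<in>E. v \<in> e1 \<inter> e2 \<longrightarrow> e1 = e2)"

lemma max_degree_twoD:
  "max_degree_two E \<Longrightarrow> e1 \<in> E \<Longrightarrow> e2 \<in> E \<Longrightarrow> e3 \<in> E \<Longrightarrow> v \<in> e1 \<Longrightarrow> v \<in> e2 \<Longrightarrow> v \<in> e3 \<Longrightarrow>
    e1 = e2 \<or> e1 = e3 \<or> e2 = e3"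
  unfolding max_degree_two_def by simp

lemma degree_le_oneD:
  "degree_le_one E v \<Longrightarrow> e1 \<in> E \<Longrightarrow> e2 \<in> E \<Longrightarrow> v \<in> e1 \<Longrightarrow> v \<in> e2 \<Longrightarrow> e1 = e2"
  unfolding degree_le_one_def by simp

text \<open>The vertices of a path between two leaves form a set closed under incident edges (inner
  vertices already carry their two path edges), so by connectivity the path contains the third
  leaf, which would then be an inner vertex.\<close>

lemma max_degree_two_no_three_leaves:
  assumes conn: "connected_graph V E" and deg: "max_degree_two E"
    and in_V: "x1 \<in> V" "x2 \<in> V" "x3 \<in> V" and distinct: "x1 \<noteq> x2" "x1 \<noteq> x3" "x2 \<noteq> x3"
    and leaves: "degree_le_one E x1" "degree_le_one E x2" "degree_le_one E x3"
  shows False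
proof -
  obtain xs where xs: "distinct xs" "xs \<noteq> []" "hd xs = x1" "last xs = x2" "walk E xs"
    using conn in_V(1,2) unfolding connected_graph_iff_reachable by (meson reachable_distinct_walk)
  let ?n = "length xs"
  have path_edge: "{xs ! i, xs ! Suc i} \<in> E" if "Suc i < ?n" for i
    using xs(5) that unfolding walk_def by blast
  have first: "xs ! 0 = x1" and last: "xs ! (?n - 1) = x2"
    using xs(2-4) by (simp_all add: hd_conv_nth last_conv_nth)
  then have n: "2 \<le> ?n"
    using distinct(1) xs(2) by (cases xs; cases "tl xs") auto
  have inner_not_leaf: "\<not> degree_le_one E (xs ! i)"
    and inner_edges: "\<And>e. e \<in> E \<Longrightarrow> xs ! i \<in> e \<Longrightarrow> e = {xs ! (i - 1), xs ! i} \<or> e = {xs ! i, xs ! Suc i}"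
    if "0 < i" "Suc i < ?n" for i
  proof -
    let ?L = "{xs ! (i - 1), xs ! i}" and ?R = "{xs ! i, xs ! Suc i}"
    have "xs ! (i - 1) \<noteq> xs ! Suc i"
      using xs(1) that by (simp add: nth_eq_iff_index_eq)
    then have "?L \<noteq> ?R"
      by (auto simp: doubleton_eq_iff)
    moreover have "?L \<in> E" "?R \<in> E"
      using path_edge[of "i - 1"] path_edge[of i] that by simp_all
    ultimately show "\<not> degree_le_one E (xs ! i)"
      using degree_le_oneD[of E "xs ! i" ?L ?R] by auto
    show "e = ?L \<or> e = ?R" if "e \<in> E" "xs ! i \<in> e" for e
      using max_degree_twoD[OF deg \<open>?L \<in> E\<close> \<open>?R \<in> E\<close> that(1), of "xs ! i"] that(2) \<open>?L \<noteq> ?R\<close>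
      by auto
  qed
  have closed: "e \<subseteq> set xs" if e: "e \<in> E" "e \<inter> set xs \<noteq> {}" for e
  proof -
    obtain i where i: "i < ?n" "xs ! i \<in> e"
      using e(2) by (auto simp: in_set_conv_nth)
    consider "i = 0" | "i = ?n - 1" | "0 < i" "Suc i < ?n"
      using i(1) by linarith
    then show ?thesis
    proof cases
      case 1
      then have "e = {xs ! 0, xs ! Suc 0}"
        using degree_le_oneD[OF leaves(1) e(1) path_edge[of 0]] i(2) first n by simp
      then show ?thesis using n by (auto intro!: nth_mem)
    next
      case 2
      then have "e = {xs ! (?n - 2), xs ! Suc (?n - 2)}"
        using degree_le_oneD[OF leaves(2) e(1) path_edge[of "?n - 2"]] i(2) last n
        by (simp add: Suc_diff_Suc numeral_2_eq_2)
      then show ?thesis using n by (auto intro!: nth_mem)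
    next
      case 3
      then show ?thesis
        using inner_edges[OF 3 e(1) i(2)] by auto
    qed
  qed
  have "x3 \<notin> set xs"
  proof
    assume "x3 \<in> set xs"
    then obtain i where "i < ?n" "xs ! i = x3"
      by (auto simp: in_set_conv_nth)
    moreover have "i \<noteq> 0" "i \<noteq> ?n - 1"
      using calculation first last distinct by (metis)+
    ultimately show False
      using inner_not_leaf[of i] leaves(3) by (simp add: Suc_lessI)
  qed
  moreover have "V \<subseteq> set xs"
    using connected_graph_closed_subset[OF conn in_V(1), of "set xs"] closed xs(2,3) by auto
  ultimately show False
    using in_V(3) by blast
qed

section \<open>Proper colourings and the upper bound\<close>

lemma proper_edges_cong: "(\<And>e. e \<in> A \<Longrightarrow> c e = c' e) \<Longrightarrow> proper_edges c A \<Longrightarrow> proper_edges c' A"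
  unfolding proper_edges_def by metis

lemma proper_edges_Un:
  assumes "proper_edges c A" "pairwise disjnt B" "\<And>a b. a \<in> A \<Longrightarrow> b \<in> B \<Longrightarrow> c a \<noteq> c b"
  shows "proper_edges c (A \<union> B)"
  using assms unfolding proper_edges_def pairwise_def disjnt_def by (metis Un_iff)

lemma proper_two_colours_max_degree_two:
  assumes "proper_edges c E" "\<And>e. e \<in> E \<Longrightarrow> c e < 2"
  shows "max_degree_two E"
  unfolding max_degree_two_def
proof (intro allI ballI impI)
  fix v e1 e2 e3 assume e: "e1 \<in> E" "e2 \<in> E" "e3 \<in> E" "v \<in> e1 \<inter> e2 \<inter> e3"
  show "e1 = e2 \<or> e1 = e3 \<or> e2 = e3"
  proof (rule ccontr)
    assume "\<not> ?thesis"
    then have "c e1 \<noteq> c e2" "c e1 \<noteq> c e3" "c e2 \<noteq> c e3"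
      using assms(1) e unfolding proper_edges_def by blast+
    then show False
      using assms(2) e(1-3) by (metis less_2_cases)
  qed
qed

lemma exists_k_proper_coloring:
  assumes "graph V E" "connected_graph V E"
  shows "\<exists>c. (\<forall>e\<in>E. c e < card E) \<and> k_proper_coloring k V E c"
proof -
  obtain c where c: "bij_betw c E {0..<card E}"
    using ex_bij_betw_finite_nat graph_finite_edges[OF assms(1)] by blast
  obtain ET where ET: "ET \<subseteq> E" "is_tree V ET"
    using connected_graph_spanning_tree[OF assms] .
  have "subgraph V ET V E"
    using ET(1) graph_edge_subset[OF assms(1)] unfolding subgraph_def by blast
  moreover have "proper_edges c ET"
    using ET(1) bij_betw_imp_inj_on[OF c] unfolding proper_edges_def by (meson inj_on_contraD subsetD)
  ultimately have "proper_tree_containing V E c S" if "S \<subseteq> V" for S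
    using ET(2) that unfolding proper_tree_containing_def by blast
  moreover have "c e < card E" if "e \<in> E" for e
    using bij_betwE[OF c] that by simp
  ultimately show ?thesis
    unfolding k_proper_coloring_def by blast
qed

lemma pxk_le: "(\<forall>e\<in>E. c e < n) \<Longrightarrow> k_proper_coloring k V E c \<Longrightarrow> pxk k V E \<le> n"
  unfolding pxk_def by (blast intro: Least_le)

lemma pxk_attained:
  assumes "graph V E" "connected_graph V E"
  obtains c where "\<forall>e\<in>E. c e < pxk k V E" "k_proper_coloring k V E c"
  using LeastI_ex[of "\<lambda>n. \<exists>c. (\<forall>e\<in>E. c e < n) \<and> k_proper_coloring k V E c"]
    exists_k_proper_coloring[OF assms] that
  unfolding pxk_def by blast

lemma distinct_representatives:
  assumes "finite X" "\<And>x. x \<in> X \<Longrightarrow> finite (N x) \<and> card X \<le> card (N x)"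
  obtains g where "inj_on g X" "\<And>x. x \<in> X \<Longrightarrow> g x \<in> N x"
proof -
  have "\<exists>g. inj_on g X \<and> (\<forall>x\<in>X. g x \<in> N x)"
    using assms
  proof (induction X rule: finite_induct)
    case (insert x F)
    have "\<And>y. y \<in> F \<Longrightarrow> finite (N y) \<and> card F \<le> card (N y)"
      using insert.prems insert.hyps by fastforce
    then obtain g where g: "inj_on g F" "\<forall>y\<in>F. g y \<in> N y"
      using insert.IH by blast
    have "card (g ` F) < card (N x)"
      using card_image_le[OF insert.hyps(1), of g] insert.hyps insert.prems[of x] by simp
    then obtain a where a: "a \<in> N x" "a \<notin> g ` F"
      using insert.prems[of x] by (metis card_mono finite_imageI insert.hyps(1) not_le subsetI)
    have "inj_on (g(x := a)) (insert x F)"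
      using g(1) a(2) insert.hyps(2) by (auto simp: inj_on_def)
    moreover have "\<forall>y\<in>insert x F. (g(x := a)) y \<in> N y"
      using g(2) a(1) insert.hyps(2) by auto
    ultimately show ?case by blast
  qed simp
  then show thesis
    using that by blast
qed

lemma proper_tree_attach_leaves:
  assumes T: "subgraph VT ET D (induced_edges E D)" "is_tree VT ET" "proper_edges c ET"
      "\<forall>e\<in>ET. c e < n"
    and X: "D \<subseteq> V" "X \<subseteq> V - D" "inj_on g X" "\<And>x. x \<in> X \<Longrightarrow> g x \<in> VT"
      "\<And>x. x \<in> X \<Longrightarrow> {x, g x} \<in> E"
  shows "proper_tree_containing V E (\<lambda>e. if e \<subseteq> D then c e else n) (VT \<union> X)"
proof -
  let ?c' = "\<lambda>e. if e \<subseteq> D then c e else n"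
  let ?P = "(\<lambda>x. {x, g x}) ` X"
  have VT: "VT \<subseteq> D" and ET: "ET \<subseteq> E" "\<forall>e\<in>ET. e \<subseteq> VT"
    using T(1) unfolding subgraph_def induced_edges_def by auto
  have "is_tree (VT \<union> X) (ET \<union> ?P)"
    using T(2) ET(2) VT X(2,4) by (intro is_tree_add_leaves) auto
  moreover have "subgraph (VT \<union> X) (ET \<union> ?P) V E"
    using VT ET X unfolding subgraph_def by auto
  moreover have "proper_edges ?c' (ET \<union> ?P)"
  proof (rule proper_edges_Un)
    show "proper_edges ?c' ET"
      using T(3) by (rule proper_edges_cong[rotated]) (use ET(2) VT in auto)
    show "pairwise disjnt ?P"
    proof (rule pairwiseI)
      fix e f assume "e \<in> ?P" "f \<in> ?P" "e \<noteq> f"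
      then obtain x y where xy: "x \<in> X" "y \<in> X" "e = {x, g x}" "f = {y, g y}" "x \<noteq> y"
        by auto
      then have "g x \<noteq> g y" "x \<notin> D" "y \<notin> D" "g x \<in> D" "g y \<in> D"
        using inj_onD[OF X(3)] X(2,4) VT by auto
      then show "disjnt e f"
        using xy(3-5) by (auto simp: disjnt_def)
    qed
    show "?c' a \<noteq> ?c' b" if "a \<in> ET" "b \<in> ?P" for a b
    proof -
      have "?c' a < n"
        using that(1) T(4) ET(2) VT by auto
      moreover have "?c' b = n"
        using that(2) X(2) by auto
      ultimately show ?thesis
        by simp
    qed
  qed
  ultimately show ?thesis
    unfolding proper_tree_containing_def by blast
qed

lemma proper_tree_containing_subset:
  "proper_tree_containing V E c T \<Longrightarrow> S \<subseteq> T \<Longrightarrow> proper_tree_containing V E c S"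
  unfolding proper_tree_containing_def by (meson subset_trans)

lemma dominated_set_proper_tree:
  assumes G: "graph V E" "k_dominating k V E D"
    and c: "k_proper_coloring k D (induced_edges E D) c" "\<forall>e\<in>induced_edges E D. c e < n"
    and S: "S \<subseteq> V" "card S = k"
  shows "proper_tree_containing V E (\<lambda>e. if e \<subseteq> D then c e else n) S"
proof -
  let ?X = "S - D"
  let ?N = "\<lambda>x. {u \<in> D. {u, x} \<in> E}"
  have D: "D \<subseteq> V" "finite D" and dom: "\<And>x. x \<in> V - D \<Longrightarrow> k \<le> card (?N x)"
    using G unfolding graph_def k_dominating_def by (auto intro: finite_subset)
  have finS: "finite S"
    using S(1) G(1) finite_subset unfolding graph_def by blast
  have cardX: "card ?X \<le> k"
    using card_mono[OF finS, of ?X] S(2) by auto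
  have "finite (?N x) \<and> card ?X \<le> card (?N x)" if "x \<in> ?X" for x
    using dom[of x] that S(1) cardX D(2) by auto
  then obtain g where g: "inj_on g ?X" "\<And>x. x \<in> ?X \<Longrightarrow> g x \<in> ?N x"
    using distinct_representatives[of ?X ?N] finS by blast
  have "k \<le> card D"
  proof (cases "?X = {}")
    case True
    then show ?thesis using S(2) D(2) card_mono[of D S] by auto
  next
    case False
    then obtain x where "x \<in> ?X" by blast
    then show ?thesis using dom[of x] S(1) card_mono[OF D(2), of "?N x"] by auto
  qed
  moreover have "card (S \<inter> D \<union> g ` ?X) \<le> k"
    using card_Un_le[of "S \<inter> D" "g ` ?X"] card_image_le[of ?X g] finS card_Int_Diff[OF finS, of D] S(2)
    by simp
  moreover have "S \<inter> D \<union> g ` ?X \<subseteq> D"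
    using g(2) by auto
  ultimately obtain S' where S': "S \<inter> D \<union> g ` ?X \<subseteq> S'" "S' \<subseteq> D" "card S' = k"
    using exists_subset_between D(2) by metis
  then obtain VT ET where T: "subgraph VT ET D (induced_edges E D)" "is_tree VT ET" "S' \<subseteq> VT"
      "proper_edges c ET"
    using c(1) unfolding k_proper_coloring_def proper_tree_containing_def by blast
  have "\<forall>e\<in>ET. c e < n"
    using T(1) c(2) unfolding subgraph_def by blast
  then have "proper_tree_containing V E (\<lambda>e. if e \<subseteq> D then c e else n) (VT \<union> ?X)"
    using T S' g S(1) D(1) by (intro proper_tree_attach_leaves) (auto simp: insert_commute)
  moreover have "S \<subseteq> VT \<union> ?X"
    using S'(1) T(3) by blast
  ultimately show ?thesis
    by (rule proper_tree_containing_subset)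
qed

lemma pxk_le_dominating_plus_one:
  assumes "graph V E" "connected_k_dominating k V E D"
  shows "pxk k V E \<le> pxk k D (induced_edges E D) + 1"
proof -
  let ?n = "pxk k D (induced_edges E D)"
  have "graph D (induced_edges E D)" "connected_graph D (induced_edges E D)"
    using assms graph_induced unfolding connected_k_dominating_def k_dominating_def by auto
  then obtain c where c: "\<forall>e\<in>induced_edges E D. c e < ?n" "k_proper_coloring k D (induced_edges E D) c"
    by (rule pxk_attained)
  let ?c' = "\<lambda>e. if e \<subseteq> D then c e else ?n"
  have "\<forall>e\<in>E. ?c' e < ?n + 1"
    using c(1) unfolding induced_edges_def by auto
  moreover have "k_proper_coloring k V E ?c'"
    unfolding k_proper_coloring_def
  proof (intro allI impI)
    fix S assume "S \<subseteq> V \<and> card S = k"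
    then show "proper_tree_containing V E ?c' S"
      using assms(2) unfolding connected_k_dominating_def
      by (intro dominated_set_proper_tree[OF assms(1) _ c(2) c(1)]) auto
  qed
  ultimately show ?thesis
    by (rule pxk_le)
qed

section \<open>A graph attaining the bound\<close>

lemma pigeonhole_fibre:
  assumes "finite B" "f ` A \<subseteq> B" "card B * m < card A"
  obtains y where "m < card {x \<in> A. f x = y}"
proof (rule ccontr)
  assume "\<not> thesis"
  then have small: "card {x \<in> A. f x = y} \<le> m" for y
    using that by (meson not_le)
  have "A = (\<Union>y\<in>B. {x \<in> A. f x = y})"
    using assms(2) by blast
  then have "card A \<le> (\<Sum>y\<in>B. card {x \<in> A. f x = y})"
    using card_UN_le[OF assms(1)] by metis
  also have "\<dots> \<le> card B * m"
    using sum_bounded_above[of B "\<lambda>y. card {x \<in> A. f x = y}" m] small by simp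
  finally show False
    using assms(3) by simp
qed

text \<open>If \<open>x\<close> had two neighbours in \<open>D\<close>, the other vertices of \<open>T\<close> would need
  \<open>card T - 1\<close> further, pairwise distinct neighbours in \<open>D\<close>.\<close>

lemma private_neighbours_leaves:
  assumes conn: "connected_graph VT ET" and T: "T \<subseteq> VT" "finite T" "T \<inter> D = {}"
    and D: "finite D" "card D \<le> card T"
    and nbrs: "\<And>t e. t \<in> T \<Longrightarrow> e \<in> ET \<Longrightarrow> t \<in> e \<Longrightarrow> \<exists>p\<in>D. e = {p, t}"
    and exclusive: "\<And>p t t'. p \<in> D \<Longrightarrow> t \<in> T \<Longrightarrow> t' \<in> T \<Longrightarrow> {p, t} \<in> ET \<Longrightarrow> {p, t'} \<in> ET \<Longrightarrow> t = t'"
    and x: "x \<in> T"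
  shows "degree_le_one ET x"
  unfolding degree_le_one_def
proof (intro ballI impI, rule ccontr)
  fix e1 e2 assume e: "e1 \<in> ET" "e2 \<in> ET" "x \<in> e1 \<inter> e2" "e1 \<noteq> e2"
  then obtain p q where pq: "p \<in> D" "q \<in> D" "p \<noteq> q" "{p, x} \<in> ET" "{q, x} \<in> ET"
    using nbrs[OF x e(1)] nbrs[OF x e(2)] by auto
  have "\<exists>r\<in>D. {r, t} \<in> ET" if t: "t \<in> T - {x}" for t
  proof -
    obtain e where "e \<in> ET" "t \<in> e"
      using connected_graph_vertex_on_edge[OF conn, of t x] t T(1) x by blast
    then show ?thesis
      using nbrs t by blast
  qed
  then obtain r where r: "\<And>t. t \<in> T - {x} \<Longrightarrow> r t \<in> D \<and> {r t, t} \<in> ET"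
    by metis
  have "inj_on r (T - {x})"
  proof (rule inj_onI)
    fix t t' assume "t \<in> T - {x}" "t' \<in> T - {x}" "r t = r t'"
    then show "t = t'"
      using exclusive[of "r t" t t'] r[of t] r[of t'] by simp
  qed
  moreover have "r ` (T - {x}) \<subseteq> D - {p, q}"
  proof
    fix s assume "s \<in> r ` (T - {x})"
    then obtain t where t: "t \<in> T - {x}" "s = r t"
      by blast
    have "r t \<noteq> p" "r t \<noteq> q"
      using exclusive[of p t x] exclusive[of q t x] r[OF t(1)] t(1) x pq by auto
    then show "s \<in> D - {p, q}"
      using r[OF t(1)] t(2) by simp
  qed
  ultimately have "card (T - {x}) \<le> card (D - {p, q})"
    using D(1) by (intro card_inj_on_le) auto
  moreover have "card {p, q} \<le> card D" "0 < card T"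
    using card_mono[OF D(1), of "{p, q}"] pq(1,2) card_gt_0_iff T(2) x by auto
  ultimately show False
    using D pq(1-3) x T(2) by (simp add: card_Diff_subset)
qed

definition tight_D :: "nat set" where "tight_D = {0, 1, 2}"

text \<open>Seventeen vertices in \<open>tight_X\<close> are what the pigeonhole step needs: \<open>17 > 2 * 2^3\<close>.\<close>

definition tight_X :: "nat set" where "tight_X = {3..<20}"

definition tight_V :: "nat set" where "tight_V = tight_D \<union> tight_X"

definition tight_E :: "nat set set" where
  "tight_E = {{0, 1}, {1, 2}} \<union> {{p, x} | p x. p \<in> tight_D \<and> x \<in> tight_X}"

lemma tight_D_X_disjoint: "tight_D \<inter> tight_X = {}"
  unfolding tight_D_def tight_X_def by auto

lemma tight_E_edge_at_X: "x \<in> tight_X \<Longrightarrow> e \<in> tight_E \<Longrightarrow> x \<in> e \<Longrightarrow> \<exists>p\<in>tight_D. e = {p, x}"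
  unfolding tight_E_def tight_D_def tight_X_def by auto

lemma tight_E_cases:
  assumes "e \<in> tight_E"
  obtains "e = {0, 1}" | "e = {1, 2}" | p x where "p \<in> tight_D" "x \<in> tight_X" "e = {p, x}"
  using assms unfolding tight_E_def by blast

lemma tight_graph: "graph tight_V tight_E"
  unfolding graph_def
proof (intro conjI ballI)
  show "finite tight_V"
    by (simp add: tight_V_def tight_D_def tight_X_def)
  fix e assume "e \<in> tight_E"
  then show "\<exists>u v. e = {u, v} \<and> u \<in> tight_V \<and> v \<in> tight_V \<and> u \<noteq> v"
  proof (cases rule: tight_E_cases)
    case 1
    then show ?thesis by (intro exI[of _ 0] exI[of _ 1]) (simp add: tight_V_def tight_D_def)
  next
    case 2
    then show ?thesis by (intro exI[of _ 1] exI[of _ 2]) (simp add: tight_V_def tight_D_def)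
  next
    case (3 p x)
    then show ?thesis
      using tight_D_X_disjoint by (intro exI[of _ p] exI[of _ x]) (auto simp: tight_V_def)
  qed
qed

lemma tight_induced_edges: "induced_edges tight_E tight_D = {{0, 1}, {1, 2}}"
proof
  show "induced_edges tight_E tight_D \<subseteq> {{0, 1}, {1, 2}}"
  proof
    fix e assume "e \<in> induced_edges tight_E tight_D"
    then have e: "e \<in> tight_E" "e \<subseteq> tight_D"
      unfolding induced_edges_def by auto
    show "e \<in> {{0, 1}, {1, 2}}"
      using e(2) tight_D_X_disjoint by (cases rule: tight_E_cases[OF e(1)]) auto
  qed
  show "{{0, 1}, {1, 2}} \<subseteq> induced_edges tight_E tight_D"
    unfolding induced_edges_def tight_E_def tight_D_def by auto
qed

lemma tight_path_tree: "is_tree tight_D {{0, 1}, {1, 2}}"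
proof -
  have "is_tree ({1} \<union> {0, 2}) ({} \<union> (\<lambda>x. {x, 1 :: nat}) ` {0, 2})"
    by (intro is_tree_add_leaves is_tree_singleton) auto
  moreover have "{1} \<union> {0, 2} = tight_D" "{} \<union> (\<lambda>x. {x, 1}) ` {0, 2} = {{0, 1}, {1, 2 :: nat}}"
    unfolding tight_D_def by (auto simp: insert_commute)
  ultimately show ?thesis
    by simp
qed

lemma tight_D_X_edge:
  assumes "p \<in> tight_D" "x \<in> tight_X"
  shows "{p, x} \<in> tight_E" "{x, p} \<in> tight_E"
proof -
  show "{p, x} \<in> tight_E"
    using assms unfolding tight_E_def by blast
  then show "{x, p} \<in> tight_E"
    by (simp add: insert_commute)
qed

lemma tight_connected: "connected_graph tight_V tight_E"
proof (rule connected_graphI_root[of 1])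
  fix v assume v: "v \<in> tight_V"
  have "v = 1 \<or> {1, v} \<in> tight_E"
  proof (cases "v \<in> tight_X")
    case True
    then show ?thesis
      using tight_D_X_edge(1)[of 1 v] by (simp add: tight_D_def)
  next
    case False
    then have "v \<in> {0, 1, 2}"
      using v by (simp add: tight_V_def tight_D_def)
    then show ?thesis
      by (auto simp: tight_E_def insert_commute)
  qed
  then show "reachable tight_V tight_E 1 v"
    using v by (elim disjE) (auto intro: reachable_refl reachable_edge simp: tight_V_def tight_D_def)
qed (simp add: tight_V_def tight_D_def)

lemma tight_min_degree: "min_degree_ge tight_V tight_E 3"
  unfolding min_degree_ge_def degree_def
proof
  fix v assume v: "v \<in> tight_V"
  obtain N where "N \<subseteq> {u \<in> tight_V. {u, v} \<in> tight_E}" "card N = 3"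
  proof (cases "v \<in> tight_X")
    case True
    then have "tight_D \<subseteq> {u \<in> tight_V. {u, v} \<in> tight_E}"
      using tight_D_X_edge by (auto simp: tight_V_def)
    then show thesis
      using that[of tight_D] by (simp add: tight_D_def)
  next
    case False
    then have "v \<in> tight_D"
      using v unfolding tight_V_def by blast
    then have "{3, 4, 5} \<subseteq> {u \<in> tight_V. {u, v} \<in> tight_E}"
      using tight_D_X_edge(2)[of v] by (auto simp: tight_V_def tight_X_def)
    then show thesis
      using that[of "{3, 4, 5}"] by simp
  qed
  moreover have "finite {u \<in> tight_V. {u, v} \<in> tight_E}"
    using tight_graph unfolding graph_def by simp
  ultimately show "3 \<le> card {u \<in> tight_V. {u, v} \<in> tight_E}"
    by (metis card_mono)
qed

lemma tight_dominating: "connected_k_dominating 3 tight_V tight_E tight_D"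
  unfolding connected_k_dominating_def k_dominating_def tight_induced_edges
proof (intro conjI ballI)
  fix v assume "v \<in> tight_V - tight_D"
  then have "{u \<in> tight_D. {u, v} \<in> tight_E} = tight_D"
    unfolding tight_V_def tight_E_def by auto
  then show "3 \<le> card {u \<in> tight_D. {u, v} \<in> tight_E}"
    by (simp add: tight_D_def)
qed (use tight_path_tree in \<open>auto simp: tight_V_def is_tree_def\<close>)

lemma tight_pxk_D: "pxk 3 tight_D (induced_edges tight_E tight_D) \<le> 2"
proof (rule pxk_le)
  let ?c = "\<lambda>e :: nat set. if e = {0, 1} then 0 else 1 :: nat"
  show "\<forall>e\<in>induced_edges tight_E tight_D. ?c e < 2"
    by simp
  have "proper_edges ?c {{0, 1}, {1, 2}}"
    unfolding proper_edges_def by (simp add: doubleton_eq_iff)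
  then have "proper_tree_containing tight_D {{0, 1}, {1, 2}} ?c tight_D"
    unfolding proper_tree_containing_def subgraph_def using tight_path_tree
    by (intro exI[of _ tight_D] exI[of _ "{{0, 1}, {1, 2}}"]) (simp add: tight_D_def)
  then show "k_proper_coloring 3 tight_D (induced_edges tight_E tight_D) ?c"
    unfolding k_proper_coloring_def tight_induced_edges
    by (blast intro: proper_tree_containing_subset)
qed

lemma tight_equal_pattern_triple:
  fixes c :: "nat set \<Rightarrow> nat"
  assumes "\<And>e. e \<in> tight_E \<Longrightarrow> c e < 2"
  shows "\<exists>T\<subseteq>tight_X. card T = 3 \<and> (\<forall>p\<in>tight_D. \<forall>t\<in>T. \<forall>t'\<in>T. c {p, t} = c {p, t'})"
proof -
  define pattern where "pattern x = (c {0, x}, c {1, x}, c {2, x})" for x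
  let ?B = "{..<2::nat} \<times> {..<2::nat} \<times> {..<2::nat}"
  have "pattern ` tight_X \<subseteq> ?B"
    using assms tight_D_X_edge(1) unfolding pattern_def tight_D_def by auto
  moreover have "finite ?B" "card ?B * 2 < card tight_X"
    by (simp_all add: tight_X_def)
  ultimately obtain y where "2 < card {x \<in> tight_X. pattern x = y}"
    using pigeonhole_fibre[of ?B pattern tight_X 2] by blast
  then obtain T where T: "T \<subseteq> {x \<in> tight_X. pattern x = y}" "card T = 3"
    using obtain_subset_with_card_n[of 3 "{x \<in> tight_X. pattern x = y}"] by force
  have "\<forall>p\<in>tight_D. \<forall>t\<in>T. \<forall>t'\<in>T. c {p, t} = c {p, t'}"
    using T(1) unfolding pattern_def tight_D_def by auto
  then show ?thesis
    using T by blast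
qed

lemma tight_pxk_V: "3 \<le> pxk 3 tight_V tight_E"
proof (rule ccontr)
  assume "\<not> 3 \<le> pxk 3 tight_V tight_E"
  moreover obtain c where "\<forall>e\<in>tight_E. c e < pxk 3 tight_V tight_E"
    and c: "k_proper_coloring 3 tight_V tight_E c"
    by (rule pxk_attained[OF tight_graph tight_connected])
  ultimately have c2: "\<And>e. e \<in> tight_E \<Longrightarrow> c e < 2"
    by fastforce
  obtain T where T: "T \<subseteq> tight_X" "card T = 3"
    and same: "\<forall>p\<in>tight_D. \<forall>t\<in>T. \<forall>t'\<in>T. c {p, t} = c {p, t'}"
    using tight_equal_pattern_triple[of c, OF c2] by blast
  have "T \<subseteq> tight_V"
    using T(1) by (auto simp: tight_V_def)
  then have "proper_tree_containing tight_V tight_E c T"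
    using c T(2) unfolding k_proper_coloring_def by blast
  then obtain VT ET where tree: "subgraph VT ET tight_V tight_E" "is_tree VT ET" "T \<subseteq> VT"
      "proper_edges c ET"
    unfolding proper_tree_containing_def by blast
  have ET: "ET \<subseteq> tight_E" and conn: "connected_graph VT ET"
    using tree(1,2) unfolding subgraph_def is_tree_def by auto
  have "degree_le_one ET x" if "x \<in> T" for x
  proof (rule private_neighbours_leaves[OF conn tree(3) _ _ _ _ _ _ that])
    show "finite T" "T \<inter> tight_D = {}" "finite tight_D" "card tight_D \<le> card T"
      using T tight_D_X_disjoint card.infinite by (fastforce simp: tight_D_def)+
    show "\<exists>p\<in>tight_D. e = {p, t}" if "t \<in> T" "e \<in> ET" "t \<in> e" for t e
      using tight_E_edge_at_X that ET T(1) by blast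
    show "t = t'" if "p \<in> tight_D" "t \<in> T" "t' \<in> T" "{p, t} \<in> ET" "{p, t'} \<in> ET" for p t t'
    proof (rule ccontr)
      assume "t \<noteq> t'"
      then have "c {p, t} \<noteq> c {p, t'}"
        using tree(4) that(4,5) unfolding proper_edges_def by (auto simp: doubleton_eq_iff)
      then show False
        using same that(1-3) by blast
    qed
  qed
  moreover obtain x1 x2 x3 where "T = {x1, x2, x3}" "x1 \<noteq> x2" "x2 \<noteq> x3" "x1 \<noteq> x3"
    using T(2) card_3_iff by metis
  moreover have "max_degree_two ET"
    using tree(4) c2 ET by (intro proper_two_colours_max_degree_two) auto
  ultimately show False
    using max_degree_two_no_three_leaves[OF conn, of x1 x2 x3] tree(3) by auto
qed

theorem theorem3p4:
  shows "(\<forall>(V :: 'a set) E D. graph V E \<and> connected_graph V E \<and> min_degree_ge V E 3 \<and>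
            connected_k_dominating 3 V E D \<longrightarrow>
            pxk 3 V E \<le> pxk 3 D (induced_edges E D) + 1)
       \<and> (\<exists>(V :: nat set) E D. graph V E \<and> connected_graph V E \<and> min_degree_ge V E 3 \<and>
            connected_k_dominating 3 V E D \<and>
            pxk 3 V E = pxk 3 D (induced_edges E D) + 1)"
proof
  show "\<forall>(V :: 'a set) E D. graph V E \<and> connected_graph V E \<and> min_degree_ge V E 3 \<and>
          connected_k_dominating 3 V E D \<longrightarrow> pxk 3 V E \<le> pxk 3 D (induced_edges E D) + 1"
    using pxk_le_dominating_plus_one by blast
  have "pxk 3 tight_V tight_E = pxk 3 tight_D (induced_edges tight_E tight_D) + 1"
    using pxk_le_dominating_plus_one[OF tight_graph tight_dominating] tight_pxk_D tight_pxk_V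
    by linarith
  then show "\<exists>(V :: nat set) E D. graph V E \<and> connected_graph V E \<and> min_degree_ge V E 3 \<and>
      connected_k_dominating 3 V E D \<and> pxk 3 V E = pxk 3 D (induced_edges E D) + 1"
    using tight_graph tight_connected tight_min_degree tight_dominating by blast
qed

end
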